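(* Let $q_A,q_B,q_C\in\mathbb{Q}[t,x]$ be \begin{align*} q_A&=x^2+(2t^2-6t+12)x+t^4-6t^3+24t^2-36t+36,\\ q_B&=x^3+(8t^2-18t)x^2+(20t^4-84t^3+72t^2)x+16t^6-96t^5+168t^4-144t^3+216t^2,\\ q_C&=x^3+(8t^2-18t)x^2+(20t^4-84t^3+72t^2)x+16t^6-96t^5+160t^4-72t^3, \end{align*} and for $H\in\{A,B,C\}$ let $Y_H$ be the affine plane curve $q_H(t,x)=0$. Then: (a) $Y_A(\mathbb{Q})=\{(0,-6)\}$; (b) $Y_B(\mathbb{Q})=\{(0,0),(3,0),(3,-18)\}$; (c) with $\eta(t)=\dfrac{t^3+3t^2-6t+1}{t(t-1)}$, there is a rational function $\lambda\in\mathbb{Q}(t)$ such that \[Y_C(\mathbb{Q})=\{(0,0)\}\cup\{(\eta(v),\lambda(v)):v\in\mathbb{Q}\setminus\{0,1\}\}.\] *)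

theory Defs
  imports "HOL-Computational_Algebra.Polynomial"
begin

definition qA :: "rat \<Rightarrow> rat \<Rightarrow> rat" where
  "qA t x = x^2 + (2*t^2 - 6*t + 12)*x + t^4 - 6*t^3 + 24*t^2 - 36*t + 36"

definition qB :: "rat \<Rightarrow> rat \<Rightarrow> rat" where
  "qB t x = x^3 + (8*t^2 - 18*t)*x^2 + (20*t^4 - 84*t^3 + 72*t^2)*x
            + 16*t^6 - 96*t^5 + 168*t^4 - 144*t^3 + 216*t^2"

definition qC :: "rat \<Rightarrow> rat \<Rightarrow> rat" where
  "qC t x = x^3 + (8*t^2 - 18*t)*x^2 + (20*t^4 - 84*t^3 + 72*t^2)*x
            + 16*t^6 - 96*t^5 + 160*t^4 - 72*t^3"

definition rat_points :: "(rat \<Rightarrow> rat \<Rightarrow> rat) \<Rightarrow> (rat \<times> rat) set" where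
  "rat_points q = {(t, x). q t x = 0}"

definition eta :: "rat \<Rightarrow> rat" where
  "eta t = (t^3 + 3*t^2 - 6*t + 1) / (t*(t - 1))"

end

theory Submission
  imports Defs "HOL-Computational_Algebra.Primes" "HOL-Computational_Algebra.Nth_Powers"
begin

text \<open>
  Part (a): \<open>4 q\<^sub>A\<close> is a sum of two squares.
  Part (b): substituting \<open>x = t w - 2 t\<^sup>2\<close> turns \<open>q\<^sub>B\<close> into \<open>t\<^sup>2\<close> times a quadratic in \<open>t\<close>, whose
  discriminant must be a rational square.  This gives a rational point on the curve
  \<open>v\<^sup>2 = w (w\<^sup>3 - 24 w\<^sup>2 + 144 w - 288)\<close>, which maps to the Fermat cubic, so \<open>w \<in> {0, 6}\<close> by
  Fermat's Last Theorem for exponent 3.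
  Part (c): the same substitution with \<open>w = 4 - 2 v\<close> makes \<open>q\<^sub>C\<close> linear in \<open>t\<close>, with root \<open>\<eta>(v)\<close>.

  Fermat's Last Theorem for exponent 3 is proved by Euler's descent.  Its key step, that
  \<open>p + q\<surd>-3\<close> is a cube when \<open>p\<^sup>2 + 3 q\<^sup>2\<close> is a cube (for coprime \<open>p, q\<close> of opposite parity,
  \<open>p\<close> prime to 3), uses unique factorisation in the Eisenstein integers \<open>\<int>[\<omega>]\<close>, which are
  Euclidean for the norm; the parity condition excludes the units other than \<open>\<plusminus>1\<close>.
\<close>

lemma prime_elem_power_dvd_coprime_mult:
  fixes p a b :: "'a :: algebraic_semidom"
  assumes "prime_elem p" "coprime a b" "p ^ n dvd a * b"
  shows "p ^ n dvd a \<or> p ^ n dvd b"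
proof (cases "n = 0")
  case False
  have "\<not> (p dvd a \<and> p dvd b)"
    using assms(1,2) coprime_common_divisor prime_elem_not_unit by blast
  then have "\<not> p ^ 1 dvd a \<or> \<not> p ^ 1 dvd b" by simp
  then show ?thesis
    using prime_elem_power_dvd_cases[OF assms(3) _ assms(1), of n 1]
      prime_elem_power_dvd_cases[OF assms(3) _ assms(1), of 1 n] False by auto
qed simp

lemma coprime_intI_primes:
  fixes x y :: int
  assumes "\<And>l. prime l \<Longrightarrow> l dvd x \<Longrightarrow> l dvd y \<Longrightarrow> False"
  shows "coprime x y"
proof (rule coprimeI)
  fix c assume c: "c dvd x" "c dvd y"
  show "is_unit c"
  proof (rule ccontr)
    assume "\<not> is_unit c"
    moreover have "c \<noteq> 0"
      using c assms[of 2] by auto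
    ultimately obtain l where "prime l" "l dvd c"
      using prime_divisor_exists by blast
    then show False using assms c by (meson dvd_trans)
  qed
qed

lemma prime_dvd_six_int:
  fixes l :: int
  assumes "prime l" "l dvd 6"
  shows "l = 2 \<or> l = 3"
proof -
  have "l dvd 2 \<or> l dvd 3" using assms prime_dvd_mult_iff[of l 2 3] by simp
  then show ?thesis using assms(1) primes_dvd_imp_eq[of l 2] primes_dvd_imp_eq[of l 3] by auto
qed

lemma coprime_six_int:
  fixes x :: int
  assumes "odd x" "\<not> 3 dvd x"
  shows "coprime x 6"
proof -
  have "coprime x 2" "coprime x 3"
    using assms prime_imp_coprime[of 3 x] by (simp_all add: coprime_commute)
  then show ?thesis using coprime_mult_right_iff[of x 2 3] by simp
qed

lemma coprime_six_mult_norm_form: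
  fixes p q :: int
  assumes "coprime p q" "odd (p + q)" "\<not> 3 dvd p"
  shows "coprime (6 * p * q) (p^2 + 3 * q^2)"
proof (rule coprime_intI_primes)
  fix l :: int assume l: "prime l" "l dvd 6 * p * q" "l dvd p^2 + 3 * q^2"
  have "p^2 + 3 * q^2 = (p + q)^2 + 2 * (q^2 - p * q)" by (simp add: power2_eq_square algebra_simps)
  then have "odd (p^2 + 3 * q^2)" using assms(2) by simp
  have three: "3 dvd p" if "3 dvd p^2 + 3 * q^2"
  proof -
    have "3 dvd p^2" using that by (simp add: dvd_add_left_iff)
    then show ?thesis using prime_dvd_power[of 3 p 2] by simp
  qed
  have "l dvd 6 \<or> l dvd p \<or> l dvd q" using l by (simp add: prime_dvd_mult_iff)
  then show False
  proof (elim disjE)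
    assume "l dvd 6"
    then have "l = 2 \<or> l = 3" using prime_dvd_six_int l(1) by blast
    then show False using l(3) assms(3) \<open>odd (p^2 + 3 * q^2)\<close> three by auto
  next
    assume "l dvd p"
    then have "l dvd 3 * q^2" using l(3) by (simp add: dvd_add_right_iff power2_eq_square)
    then have "l dvd 3 \<or> l dvd q" using l(1) by (auto simp: prime_dvd_mult_iff prime_dvd_power_iff)
    moreover have "\<not> l dvd q"
      using \<open>l dvd p\<close> l(1) assms(1) coprime_common_divisor not_prime_unit by blast
    ultimately have "l = 3" using l(1) primes_dvd_imp_eq[of l 3] by auto
    then show False using \<open>l dvd p\<close> assms(3) by simp
  next
    assume "l dvd q"
    then have "l dvd p^2" using l(3) by (simp add: dvd_add_left_iff power2_eq_square)
    then have "l dvd p" using l(1) prime_dvd_power by blast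
    then have "is_unit l" using \<open>l dvd q\<close> assms(1) coprime_common_divisor by blast
    then show False using l(1) not_prime_unit by blast
  qed
qed

lemma dvd_lincomb_coprime_int:
  fixes a b c :: int
  assumes "coprime a b" "c dvd \<alpha> * a + \<beta> * b" "c dvd \<gamma> * a + \<delta> * b"
  shows "c dvd \<alpha> * \<delta> - \<beta> * \<gamma>"
proof -
  have "c dvd \<delta> * (\<alpha> * a + \<beta> * b) - \<beta> * (\<gamma> * a + \<delta> * b)"
    "c dvd \<alpha> * (\<gamma> * a + \<delta> * b) - \<gamma> * (\<alpha> * a + \<beta> * b)"
    using assms(2,3) by (simp_all add: dvd_diff)
  then have "c dvd (\<alpha> * \<delta> - \<beta> * \<gamma>) * a" "c dvd (\<alpha> * \<delta> - \<beta> * \<gamma>) * b"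
    by (simp_all add: algebra_simps)
  then have "c dvd gcd ((\<alpha> * \<delta> - \<beta> * \<gamma>) * a) ((\<alpha> * \<delta> - \<beta> * \<gamma>) * b)"
    by (rule gcd_greatest)
  then show ?thesis using assms(1) by (simp add: gcd_mult_left coprime_iff_gcd_eq_1)
qed

lemma coprime_lincomb_int:
  fixes a b :: int
  assumes "coprime a b" "coprime (\<alpha> * a + \<beta> * b) (\<alpha> * \<delta> - \<beta> * \<gamma>)"
  shows "coprime (\<alpha> * a + \<beta> * b) (\<gamma> * a + \<delta> * b)"
  using assms dvd_lincomb_coprime_int[OF assms(1)] by (meson coprime_common_divisor coprimeI)

lemma coprime_mult_odd_power_int:
  fixes u v c :: int
  assumes "odd n" "coprime u v" "u * v = c ^ n"
  shows "\<exists>e. u = e ^ n"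
proof (cases "u = 0 \<or> v = 0")
  case True
  then have "u = 0 \<or> u = 1 \<or> u = -1"
    using assms(2) by (auto simp: zdvd1_eq abs_if split: if_splits)
  then have "u ^ n = u" using assms(1) by (auto simp: power_0_left odd_pos)
  then show ?thesis by (rule exI[of _ u, OF sym])
next
  case False
  have coprime_nat: "coprime (nat \<bar>u\<bar>) (nat \<bar>v\<bar>)"
    using assms(2) by simp
  have "is_nth_power n (nat \<bar>u\<bar> * nat \<bar>v\<bar>)"
    using arg_cong[OF assms(3), of "\<lambda>x. nat \<bar>x\<bar>"]
    by (auto simp: abs_mult nat_mult_distrib nat_power_eq power_abs intro: is_nth_powerI)
  then have "is_nth_power n (nat \<bar>u\<bar>)"
    using is_nth_power_mult_coprime_natD(1)[OF coprime_nat] False by simp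
  then obtain k where "nat \<bar>u\<bar> = k ^ n" by (rule is_nth_powerE)
  then have "int (nat \<bar>u\<bar>) = int (k ^ n)" by (rule arg_cong)
  then have "\<bar>u\<bar> = int k ^ n" by simp
  then show ?thesis
    using assms(1) by (cases "u \<ge> 0") (auto intro: exI[of _ "int k"] exI[of _ "- int k"])
qed

lemma coprime_factors_odd_power_int:
  fixes u v c :: int
  assumes "odd n" "coprime u v" "u * v = c ^ n"
  shows "\<exists>e f. u = e ^ n \<and> v = f ^ n"
  using coprime_mult_odd_power_int[OF assms] coprime_mult_odd_power_int[OF assms(1), of v u c] assms(2,3)
  by (simp add: coprime_commute mult.commute)

lemma pairwise_coprime_factors_odd_power_int:
  fixes a b c x :: int
  assumes "odd n" "coprime a b" "coprime a c" "coprime b c" "a * b * c = x ^ n"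
  shows "\<exists>e f g. a = e ^ n \<and> b = f ^ n \<and> c = g ^ n"
proof -
  have "coprime (a * b) c" using assms(3,4) by simp
  then obtain y g where "a * b = y ^ n" "c = g ^ n"
    using coprime_factors_odd_power_int[OF assms(1) _ assms(5)] by blast
  moreover obtain e f where "a = e ^ n" "b = f ^ n"
    using coprime_factors_odd_power_int[OF assms(1,2) \<open>a * b = y ^ n\<close>] by blast
  ultimately show ?thesis by blast
qed

lemma norm_form_less_int:
  fixes x y n :: int
  assumes "\<bar>2 * x\<bar> \<le> n" "\<bar>2 * y\<bar> \<le> n" "n > 0"
  shows "x^2 - x * y + y^2 < n^2"
proof -
  have "- (x * y) \<le> \<bar>x\<bar> * \<bar>y\<bar>"
    by (metis abs_ge_minus_self abs_mult)
  then have "(2*x)^2 \<le> n^2" "(2*y)^2 \<le> n^2" "- (2*x) * (2*y) \<le> n^2"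
    using assms abs_le_square_iff[of "2*x" n] abs_le_square_iff[of "2*y" n]
      mult_mono[OF assms(1,2)] by (auto simp: abs_mult power2_eq_square)
  moreover have "4 * (x^2 - x * y + y^2) = (2*x)^2 + (- (2*x) * (2*y)) + (2*y)^2"
    by (simp add: power2_eq_square)
  ultimately have "4 * (x^2 - x * y + y^2) \<le> 3 * n^2" by linarith
  moreover have "n^2 > 0" using assms(3) by simp
  ultimately show ?thesis by (smt (verit))
qed

section \<open>Eisenstein integers\<close>

text \<open>\<open>Eis a b\<close> represents \<open>a + b\<omega>\<close>, where \<open>\<omega>\<^sup>2 + \<omega> + 1 = 0\<close>.\<close>

datatype eis = Eis (ecoeff0: int) (ecoeff1: int)

instantiation eis :: comm_ring_1
begin
definition "0 = Eis 0 0"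
definition "1 = Eis 1 0"
definition "x + y = Eis (ecoeff0 x + ecoeff0 y) (ecoeff1 x + ecoeff1 y)"
definition "x - y = Eis (ecoeff0 x - ecoeff0 y) (ecoeff1 x - ecoeff1 y)"
definition "- x = Eis (- ecoeff0 x) (- ecoeff1 x)"
definition "x * y = Eis (ecoeff0 x * ecoeff0 y - ecoeff1 x * ecoeff1 y)
                        (ecoeff0 x * ecoeff1 y + ecoeff1 x * ecoeff0 y - ecoeff1 x * ecoeff1 y)"
instance
  by standard (auto simp: zero_eis_def one_eis_def plus_eis_def minus_eis_def uminus_eis_def
      times_eis_def algebra_simps intro!: eis.expand)
end

lemma eis_arith [simp]:
  "Eis a b + Eis c d = Eis (a + c) (b + d)"
  "Eis a b - Eis c d = Eis (a - c) (b - d)"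
  "- Eis a b = Eis (- a) (- b)"
  "Eis a b * Eis c d = Eis (a * c - b * d) (a * d + b * c - b * d)"
  by (simp_all add: plus_eis_def minus_eis_def uminus_eis_def times_eis_def)

lemma eis_zero_one: "0 = Eis 0 0" "1 = Eis 1 0"
  by (simp_all add: zero_eis_def one_eis_def)

definition eis_norm :: "eis \<Rightarrow> int" where
  "eis_norm z = ecoeff0 z ^ 2 - ecoeff0 z * ecoeff1 z + ecoeff1 z ^ 2"

definition eis_cnj :: "eis \<Rightarrow> eis" where
  "eis_cnj z = Eis (ecoeff0 z - ecoeff1 z) (- ecoeff1 z)"

lemma eis_norm_Eis: "eis_norm (Eis a b) = a^2 - a * b + b^2"
  by (simp add: eis_norm_def)

lemma four_eis_norm: "4 * eis_norm (Eis a b) = (2 * a - b)^2 + 3 * b^2"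
  by (simp add: eis_norm_def power2_eq_square algebra_simps)

lemma eis_norm_nonneg: "eis_norm z \<ge> 0"
  using four_eis_norm[of "ecoeff0 z" "ecoeff1 z"] by (smt (verit) eis.collapse zero_le_power2)

lemma eis_norm_eq_0_iff [simp]: "eis_norm z = 0 \<longleftrightarrow> z = 0"
proof
  assume "eis_norm z = 0"
  then have "(2 * ecoeff0 z - ecoeff1 z)^2 + 3 * ecoeff1 z ^ 2 = 0"
    using four_eis_norm[of "ecoeff0 z" "ecoeff1 z"] by simp
  then have "ecoeff1 z = 0" "2 * ecoeff0 z - ecoeff1 z = 0"
    by (smt (verit) zero_le_power2 power_eq_0_iff)+
  then show "z = 0" by (cases z) (simp add: eis_zero_one)
qed (simp add: eis_norm_def eis_zero_one)

lemma eis_norm_1 [simp]: "eis_norm 1 = 1"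
  by (simp add: eis_zero_one eis_norm_Eis)

lemma eis_norm_pos: "z \<noteq> 0 \<Longrightarrow> eis_norm z > 0"
  using eis_norm_nonneg[of z] eis_norm_eq_0_iff[of z] by linarith

lemma eis_norm_mult: "eis_norm (x * y) = eis_norm x * eis_norm y"
  by (cases x; cases y) (simp add: eis_norm_def power2_eq_square algebra_simps)

lemma eis_norm_power: "eis_norm (x ^ n) = eis_norm x ^ n"
  by (induction n) (simp_all add: eis_norm_mult)

lemma mult_eis_cnj: "z * eis_cnj z = Eis (eis_norm z) 0"
  by (cases z) (simp add: eis_cnj_def eis_norm_def power2_eq_square algebra_simps)

lemma eis_norm_cnj: "eis_norm (eis_cnj z) = eis_norm z"
  by (simp add: eis_cnj_def eis_norm_def power2_eq_square algebra_simps)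

text \<open>Division rounds the exact quotient \<open>a * eis_cnj b / eis_norm b\<close> coefficientwise to the
  nearest integers; in particular \<open>a div 0 = 0\<close>.\<close>

definition round_div :: "int \<Rightarrow> int \<Rightarrow> int" where
  "round_div x n = (2 * x + n) div (2 * n)"

lemma round_div_error:
  assumes "n > 0"
  shows "\<bar>2 * (x - n * round_div x n)\<bar> \<le> n"
proof -
  define r where "r = (2 * x + n) mod (2 * n)"
  have "2 * (x - n * round_div x n) = r - n"
    using div_mult_mod_eq[of "2 * x + n" "2 * n"] by (simp add: r_def round_div_def algebra_simps)
  moreover have "0 \<le> r" "r < 2 * n" using assms by (simp_all add: r_def)
  ultimately show ?thesis by simp
qed

instantiation eis :: idom_divide
begin

definition divide_eis :: "eis \<Rightarrow> eis \<Rightarrow> eis" where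
  "a div b = Eis (round_div (ecoeff0 (a * eis_cnj b)) (eis_norm b))
                 (round_div (ecoeff1 (a * eis_cnj b)) (eis_norm b))"

lemma eis_norm_mod_less:
  assumes "b \<noteq> 0"
  shows "eis_norm (a - a div b * b) < eis_norm b"
proof -
  define n where "n = eis_norm b"
  define c where "c = a * eis_cnj b"
  define r where "r = Eis (ecoeff0 c - n * round_div (ecoeff0 c) n) (ecoeff1 c - n * round_div (ecoeff1 c) n)"
  have n: "n > 0" using assms by (simp add: n_def eis_norm_pos)
  have "(a - a div b * b) * eis_cnj b = c - a div b * Eis n 0"
    by (simp add: c_def n_def left_diff_distrib mult.assoc mult_eis_cnj)
  also have "\<dots> = r"
    by (cases c) (simp add: divide_eis_def r_def c_def n_def mult.commute)
  finally have "eis_norm (a - a div b * b) * n = eis_norm r"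
    by (metis eis_norm_mult eis_norm_cnj n_def)
  also have "\<dots> < n^2"
    unfolding r_def eis_norm_Eis by (intro norm_form_less_int round_div_error n)
  finally show ?thesis using n by (simp add: n_def power2_eq_square)
qed

instance
proof
  fix a b :: eis
  show "a * b \<noteq> 0" if "a \<noteq> 0" "b \<noteq> 0"
    using that eis_norm_pos[of a] eis_norm_pos[of b] eis_norm_eq_0_iff[of "a * b"]
    by (auto simp: eis_norm_mult)
  show "a div 0 = 0" by (simp add: divide_eis_def round_div_def eis_zero_one eis_norm_def)
  assume "b \<noteq> 0"
  have "eis_norm ((a - a * b div b) * b) < eis_norm b"
    using eis_norm_mod_less[OF \<open>b \<noteq> 0\<close>, of "a * b"] by (simp add: algebra_simps)
  then have "eis_norm (a - a * b div b) < 1"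
    using eis_norm_pos[OF \<open>b \<noteq> 0\<close>] by (simp add: eis_norm_mult)
  then show "a * b div b = a"
    using eis_norm_pos[of "a - a * b div b"] by fastforce
qed

end

instance eis :: algebraic_semidom ..

lemma eis_is_unit_iff: "is_unit z \<longleftrightarrow> eis_norm z = 1"
proof
  assume "is_unit z"
  then obtain k where "1 = z * k" ..
  then have "eis_norm z * eis_norm k = 1"
    by (metis eis_norm_mult eis_norm_1)
  then show "eis_norm z = 1"
    using eis_norm_nonneg[of z] by (auto simp: zmult_eq_1_iff)
next
  assume "eis_norm z = 1"
  then have "z * eis_cnj z = 1" by (simp add: mult_eis_cnj eis_zero_one)
  then show "is_unit z" by (rule dvdI[OF sym])
qed

lemma eis_norm_dvd: "x dvd y \<Longrightarrow> eis_norm x dvd eis_norm y"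
  by (metis dvd_def eis_norm_mult)

lemma eis_bezout:
  fixes a b :: eis
  shows "\<exists>x y. (a * x + b * y) dvd a \<and> (a * x + b * y) dvd b"
proof (induction "nat (eis_norm b)" arbitrary: a b rule: less_induct)
  case less
  show ?case
  proof (cases "b = 0")
    case True
    then show ?thesis by (intro exI[of _ 1]) auto
  next
    case False
    define r where "r = a - a div b * b"
    have "nat (eis_norm r) < nat (eis_norm b)"
      using eis_norm_mod_less[OF False, of a] eis_norm_nonneg[of r] by (simp add: r_def)
    then obtain x y where xy: "(b * x + r * y) dvd b" "(b * x + r * y) dvd r"
      using less by blast
    have "b * x + r * y = a * y + b * (x - a div b * y)"
      by (simp add: r_def algebra_simps)
    moreover have "a = r + a div b * b" by (simp add: r_def)
    ultimately show ?thesis using xy by (metis dvd_add dvd_mult)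
  qed
qed

lemma eis_irreducible_imp_prime_elem:
  fixes p :: eis
  assumes "irreducible p"
  shows "prime_elem p"
proof (rule prime_elemI)
  show "p \<noteq> 0" "\<not> is_unit p" using assms by (auto simp: irreducible_def)
  fix a b assume "p dvd a * b"
  show "p dvd a \<or> p dvd b"
  proof (cases "p dvd a")
    case False
    obtain x y where d: "(p * x + a * y) dvd p" "(p * x + a * y) dvd a"
      using eis_bezout by blast
    from d(1) obtain k where k: "p = (p * x + a * y) * k" ..
    have "\<not> is_unit k" using d(2) False k by (metis mult_unit_dvd_iff)
    then have "is_unit (p * x + a * y)" using irreducibleD[OF assms k] by blast
    moreover have "(p * x + a * y) * b = p * (x * b) + (a * b) * y"
      by (simp add: algebra_simps)
    then have "p dvd (p * x + a * y) * b"
      using \<open>p dvd a * b\<close> by simp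
    ultimately show ?thesis by (simp add: dvd_mult_unit_iff')
  qed simp
qed

lemma eis_irreducible_divisor_exists:
  fixes c :: eis
  assumes "c \<noteq> 0" "\<not> is_unit c"
  shows "\<exists>p. irreducible p \<and> p dvd c"
  using assms
proof (induction "nat (eis_norm c)" arbitrary: c rule: less_induct)
  case less
  show ?case
  proof (cases "irreducible c")
    case False
    then obtain a b where ab: "c = a * b" "\<not> is_unit a" "\<not> is_unit b"
      using less.prems by (auto simp: irreducible_def)
    then have "a \<noteq> 0" "b \<noteq> 0" using less.prems by auto
    then have "nat (eis_norm a) < nat (eis_norm c)"
      using ab eis_norm_pos[of a] eis_norm_pos[of b] eis_is_unit_iff[of b]
      by (simp add: eis_norm_mult)
    then obtain p where "irreducible p" "p dvd a" using less.hyps[of a] ab \<open>a \<noteq> 0\<close> by blast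
    then show ?thesis using ab(1) by (blast intro: dvd_mult2)
  qed auto
qed

lemma eis_coprime_mult_cube:
  fixes a b c :: eis
  shows "coprime a b \<Longrightarrow> a * b = c ^ 3 \<Longrightarrow> \<exists>u g. is_unit u \<and> a = u * g ^ 3"
proof (induction "nat (eis_norm c)" arbitrary: a b c rule: less_induct)
  case less
  have "a = 0 \<or> is_unit a \<or> (\<not> is_unit c \<and> c \<noteq> 0)"
  proof (cases "c = 0 \<or> is_unit c")
    case True
    then have "a * b = 0 \<or> is_unit (a * b)"
      using less.prems(2) by (auto simp: is_unit_power_iff)
    then show ?thesis using less.prems(1) by (auto simp: is_unit_mult_iff)
  qed auto
  then consider "a = 0" | "is_unit a" | "\<not> is_unit c" "c \<noteq> 0"
    by blast
  then show ?case
  proof cases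
    case 1
    then show ?thesis by (intro exI[of _ 1] exI[of _ 0]) simp
  next
    case 2
    then show ?thesis by (intro exI[of _ a] exI[of _ 1]) simp
  next
    case 3
    then obtain p where p: "irreducible p" "p dvd c"
      using eis_irreducible_divisor_exists by blast
    from p(2) obtain c' where c': "c = p * c'" ..
    have "p \<noteq> 0" "\<not> is_unit p" using p(1) by (auto simp: irreducible_def)
    then have lt: "nat (eis_norm c') < nat (eis_norm c)"
      using 3 c' eis_norm_pos[of c'] eis_norm_pos[of p] eis_is_unit_iff[of p]
      by (auto simp: eis_norm_mult)
    have prime: "prime_elem p" using p(1) eis_irreducible_imp_prime_elem by blast
    have prod: "a * b = p ^ 3 * c' ^ 3" using less.prems c' by (simp add: power_mult_distrib)
    then have "p ^ 3 dvd a \<or> p ^ 3 dvd b"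
      using prime_elem_power_dvd_coprime_mult[OF prime less.prems(1)] by simp
    then show ?thesis
    proof
      assume "p ^ 3 dvd a"
      then obtain a' where a': "a = p ^ 3 * a'" by blast
      have "a' * b = c' ^ 3" using prod \<open>p \<noteq> 0\<close> by (simp add: a' mult.assoc)
      moreover have "coprime a' b"
        using less.prems(1) coprime_divisors[of a' a b b] by (simp add: a')
      ultimately obtain u g where "is_unit u" "a' = u * g ^ 3" using less.hyps[OF lt] by blast
      then show ?thesis by (intro exI[of _ u] exI[of _ "p * g"]) (simp add: a' power_mult_distrib)
    next
      assume "p ^ 3 dvd b"
      then obtain b' where b': "b = p ^ 3 * b'" by blast
      have "a * b' = c' ^ 3" using prod \<open>p \<noteq> 0\<close> by (simp add: b' mult.left_commute)
      moreover have "coprime a b'"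
        using less.prems(1) coprime_divisors[of a a b' b] by (simp add: b')
      ultimately show ?thesis using less.hyps[OF lt] by blast
    qed
  qed
qed

lemma eis_unit_cases:
  assumes "is_unit u"
  shows "u \<in> {Eis 1 0, Eis (-1) 0, Eis 0 1, Eis 0 (-1), Eis 1 1, Eis (-1) (-1)}"
proof (cases u)
  case (Eis x y)
  have "(2 * x - y)^2 + 3 * y^2 = 4"
    using assms four_eis_norm[of x y] by (simp add: Eis eis_is_unit_iff)
  then have "y^2 \<le> 1" by (smt (verit) zero_le_power2)
  then have "\<bar>y\<bar> \<le> 1" by (metis abs_le_square_iff abs_one one_power2)
  then have "y = -1 \<or> y = 0 \<or> y = 1" by linarith
  moreover have "x^2 - x * y + y^2 = 1"
    using assms by (simp add: Eis eis_is_unit_iff eis_norm_Eis)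
  ultimately consider "y = 0" "x^2 = 1" | "y = 1" "x * (x - 1) = 0" | "y = -1" "x * (x + 1) = 0"
    by (auto simp: power2_eq_square algebra_simps)
  then show ?thesis
    by cases (auto simp: Eis power2_eq_1_iff add_eq_0_iff2)
qed

section \<open>Euler's lemma on cubes of the form \<open>p\<^sup>2 + 3 q\<^sup>2\<close>\<close>

text \<open>\<open>eis_sqrt_m3 a b\<close> is \<open>a + b\<surd>-3\<close>, as \<open>\<surd>-3 = 1 + 2\<omega>\<close>; the subring \<open>\<int>[\<surd>-3]\<close> consists of
  the elements with even \<open>\<omega>\<close>-coefficient.\<close>

definition eis_sqrt_m3 :: "int \<Rightarrow> int \<Rightarrow> eis" where
  "eis_sqrt_m3 a b = Eis (a + b) (2 * b)"

lemma eis_sqrt_m3_cube: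
  "eis_sqrt_m3 a b ^ 3 = eis_sqrt_m3 (a^3 - 9 * a * b^2) (3 * a^2 * b - 3 * b^3)"
  by (simp add: eis_sqrt_m3_def power3_eq_cube power2_eq_square algebra_simps)

lemma eis_norm_sqrt_m3: "eis_norm (eis_sqrt_m3 a b) = a^2 + 3 * b^2"
  by (simp add: eis_sqrt_m3_def eis_norm_Eis power2_eq_square algebra_simps)

lemma eis_cube_eq_sqrt_m3_cube: "\<exists>a b. g ^ 3 = eis_sqrt_m3 a b ^ 3"
proof -
  define \<omega> where "\<omega> = Eis 0 1"
  have "\<omega> ^ 3 = 1" by (simp add: \<omega>_def power3_eq_cube eis_zero_one)
  then have "(\<omega> ^ k) ^ 3 = 1" for k
    by (metis power_mult mult.commute power_one)
  then have "(\<omega> ^ k * g) ^ 3 = g ^ 3" for k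
    by (simp add: power_mult_distrib)
  moreover obtain k where "even (ecoeff1 (\<omega> ^ k * g))"
  proof (cases g)
    case (Eis c d)
    have "\<omega> ^ 1 * g = Eis (- d) (c - d)" "\<omega> ^ 2 * g = Eis (d - c) (- c)"
      by (simp_all add: Eis \<omega>_def power2_eq_square)
    then show ?thesis using that[of 0] that[of 1] that[of 2] Eis by (cases "even d"; cases "even c") auto
  qed
  then have "\<omega> ^ k * g = eis_sqrt_m3 (ecoeff0 (\<omega> ^ k * g) - ecoeff1 (\<omega> ^ k * g) div 2)
      (ecoeff1 (\<omega> ^ k * g) div 2)"
    by (simp add: eis_sqrt_m3_def)
  ultimately show ?thesis by metis
qed

lemma eis_unit_preserving_sqrt_m3:
  assumes "is_unit u" "u * eis_sqrt_m3 P Q = eis_sqrt_m3 p q" "odd (P + Q)"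
  shows "u = 1 \<or> u = -1"
  using eis_unit_cases[OF assms(1)] assms(2,3)
  by (auto simp: eis_sqrt_m3_def eis_zero_one) presburger+

lemma eis_coprime_sqrt_m3_conj:
  fixes p q :: int
  assumes "coprime p q" "odd (p + q)" "\<not> 3 dvd p"
  shows "coprime (eis_sqrt_m3 p q) (eis_sqrt_m3 p (- q))"
proof (rule coprimeI)
  fix d assume d: "d dvd eis_sqrt_m3 p q" "d dvd eis_sqrt_m3 p (- q)"
  have "eis_norm d dvd p^2 + 3 * q^2"
    using eis_norm_dvd[OF d(1)] by (simp add: eis_norm_sqrt_m3)
  moreover have "coprime (p^2 + 3 * q^2) 6"
    using coprime_six_mult_norm_form[OF assms] by (simp add: coprime_commute)
  ultimately have "coprime (eis_norm d) 6"
    using coprime_divisors[OF _ dvd_refl] by blast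
  then have coprime_d: "coprime (eis_norm d) 36"
    using coprime_power_right_iff[of "eis_norm d" 6 2] by simp
  have "d dvd eis_sqrt_m3 p q + eis_sqrt_m3 p (- q)" "d dvd eis_sqrt_m3 p q - eis_sqrt_m3 p (- q)"
    using d by (simp_all add: dvd_add dvd_diff)
  then have "eis_norm d dvd 4 * p^2" "eis_norm d dvd 12 * q^2"
    by (auto dest!: eis_norm_dvd simp: eis_sqrt_m3_def eis_norm_Eis power2_eq_square algebra_simps)
  then have "eis_norm d dvd 36 * p^2" "eis_norm d dvd 36 * q^2"
    by (auto elim: dvd_trans intro: mult_dvd_mono)
  then have "eis_norm d dvd p^2" "eis_norm d dvd q^2"
    using coprime_d by (simp_all add: coprime_dvd_mult_right_iff)
  then have "is_unit (eis_norm d)"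
    using assms(1) coprime_common_divisor by (metis coprime_power_left_iff coprime_power_right_iff
        zero_less_numeral)
  then show "is_unit d"
    using eis_norm_nonneg[of d] by (simp add: eis_is_unit_iff)
qed

theorem euler_norm_form_cube:
  fixes p q s :: int
  assumes "coprime p q" "odd (p + q)" "\<not> 3 dvd p" "p^2 + 3 * q^2 = s^3"
  shows "\<exists>a b. p = a^3 - 9 * a * b^2 \<and> q = 3 * a^2 * b - 3 * b^3"
proof -
  have "eis_sqrt_m3 p q * eis_sqrt_m3 p (- q) = Eis s 0 ^ 3"
    using assms(4) by (simp add: eis_sqrt_m3_def power3_eq_cube power2_eq_square algebra_simps)
  then obtain u g where u: "is_unit u" and ug: "eis_sqrt_m3 p q = u * g ^ 3"
    using eis_coprime_mult_cube[OF eis_coprime_sqrt_m3_conj[OF assms(1-3)]] by blast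
  obtain a b where ab: "g ^ 3 = eis_sqrt_m3 a b ^ 3"
    using eis_cube_eq_sqrt_m3_cube by blast
  define P where "P = a^3 - 9 * a * b^2"
  define Q where "Q = 3 * a^2 * b - 3 * b^3"
  have norm_eq: "p^2 + 3 * q^2 = (a^2 + 3 * b^2) ^ 3"
    using arg_cong[OF ug, of eis_norm] u
    by (simp add: ab eis_norm_mult eis_norm_power eis_norm_sqrt_m3 eis_is_unit_iff)
  have "p^2 + 3 * q^2 = (p + q)^2 + 2 * (q^2 - p * q)"
    by (simp add: power2_eq_square algebra_simps)
  then have "odd ((a^2 + 3 * b^2) ^ 3)" using assms(2) by (simp flip: norm_eq)
  then have "odd (a^2 + 3 * b^2)" by simp
  moreover have "a^2 + 3 * b^2 = (a + b)^2 + 2 * (b^2 - a * b)"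
    by (simp add: power2_eq_square algebra_simps)
  ultimately have "odd (a + b)" by simp
  moreover have "P + Q = (a + b)^3 - 4 * b^2 * (3 * a + b)"
    by (simp add: P_def Q_def power3_eq_cube power2_eq_square algebra_simps)
  ultimately have "odd (P + Q)" by simp
  moreover have "u * eis_sqrt_m3 P Q = eis_sqrt_m3 p q"
    using ug ab by (simp add: P_def Q_def eis_sqrt_m3_cube)
  ultimately have "u = 1 \<or> u = -1" using u eis_unit_preserving_sqrt_m3 by blast
  then have "p = P \<and> q = Q \<or> p = - P \<and> q = - Q"
    using \<open>u * eis_sqrt_m3 P Q = eis_sqrt_m3 p q\<close> by (auto simp: eis_sqrt_m3_def)
  moreover have "- P = (- a)^3 - 9 * (- a) * (- b)^2" "- Q = 3 * (- a)^2 * (- b) - 3 * (- b)^3"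
    by (simp_all add: P_def Q_def)
  ultimately show ?thesis unfolding P_def Q_def by metis
qed

lemma euler_param_coprime:
  fixes a b p q :: int
  assumes "p = a^3 - 9 * a * b^2" "q = 3 * a^2 * b - 3 * b^3" "coprime p q"
  shows "coprime a b" "odd (a + b)"
proof -
  have p: "p = a * (a - 3 * b) * (a + 3 * b)" and q: "q = 3 * b * (a - b) * (a + b)"
    using assms(1,2) by (simp_all add: power2_eq_square power3_eq_cube algebra_simps)
  show "coprime a b"
    using assms(3) by (rule coprime_divisors[rotated 2]) (simp_all add: p q)
  show "odd (a + b)"
  proof
    assume "even (a + b)"
    moreover have "a + 3 * b = (a + b) + 2 * b" by simp
    ultimately have "2 dvd p" "2 dvd q" by (simp_all add: p q)
    then show False using assms(3) coprime_common_divisor[of p q 2] by simp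
  qed
qed

section \<open>Fermat's Last Theorem for exponent 3\<close>

lemma cube_sum_of_factorisation_pm3b:
  fixes a b c :: int
  assumes "coprime a b" "odd (a + b)" "\<not> 3 dvd a" "(a - 3 * b) * (a + 3 * b) * (2 * a) = c ^ 3"
  shows "\<exists>x y z. x^3 + y^3 + z^3 = 0 \<and> \<bar>x * y * z\<bar> ^ 3 = \<bar>c ^ 3\<bar>"
proof -
  have "coprime (a - 3 * b) 6" "coprime (a + 3 * b) 6"
    using assms(2,3) by (auto intro!: coprime_six_int simp: dvd_diff_left_iff) presburger+
  then have coprime: "coprime (a - 3 * b) (a + 3 * b)" "coprime (a - 3 * b) (2 * a)"
    "coprime (a + 3 * b) (2 * a)"
    using coprime_lincomb_int[OF assms(1), where \<alpha>=1 and \<beta>="-3" and \<gamma>=1 and \<delta>=3]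
      coprime_lincomb_int[OF assms(1), where \<alpha>=1 and \<beta>="-3" and \<gamma>=2 and \<delta>=0]
      coprime_lincomb_int[OF assms(1), where \<alpha>=1 and \<beta>=3 and \<gamma>=2 and \<delta>=0]
    by simp_all
  then obtain e f g where efg: "a - 3 * b = e ^ 3" "a + 3 * b = f ^ 3" "2 * a = g ^ 3"
    using pairwise_coprime_factors_odd_power_int[OF odd_numeral coprime assms(4)] by blast
  have "e^3 + f^3 + (- g)^3 = 0" using efg by simp
  moreover have "\<bar>e * f * (- g)\<bar> ^ 3 = \<bar>c ^ 3\<bar>"
    by (simp add: assms(4)[symmetric] efg abs_mult power_mult_distrib flip: power_abs)
  ultimately show ?thesis by blast
qed

lemma cube_sum_of_factorisation_pmb:
  fixes a b c :: int
  assumes "coprime a b" "odd (a + b)" "(a - b) * (a + b) * (2 * b) = c ^ 3"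
  shows "\<exists>x y z. x^3 + y^3 + z^3 = 0 \<and> \<bar>x * y * z\<bar> ^ 3 = \<bar>c ^ 3\<bar>"
proof -
  have "odd (a - b)" using assms(2) by presburger
  then have "coprime (a - b) 2" "coprime (a + b) 2" using assms(2) by simp_all
  then have coprime: "coprime (a - b) (a + b)" "coprime (a - b) (2 * b)" "coprime (a + b) (2 * b)"
    using coprime_lincomb_int[OF assms(1), where \<alpha>=1 and \<beta>="-1" and \<gamma>=1 and \<delta>=1]
      coprime_lincomb_int[OF assms(1), where \<alpha>=1 and \<beta>="-1" and \<gamma>=0 and \<delta>=2]
      coprime_lincomb_int[OF assms(1), where \<alpha>=1 and \<beta>=1 and \<gamma>=0 and \<delta>=2]
    by simp_all
  then obtain e f g where efg: "a - b = e ^ 3" "a + b = f ^ 3" "2 * b = g ^ 3"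
    using pairwise_coprime_factors_odd_power_int[OF odd_numeral coprime assms(3)] by blast
  have "(f * (- e) * (- g)) ^ 3 = f ^ 3 * e ^ 3 * g ^ 3"
    by (simp add: power_mult_distrib)
  also have "\<dots> = c ^ 3"
    unfolding assms(3)[symmetric] efg[symmetric] by (simp add: ac_simps)
  finally have "\<bar>f * (- e) * (- g)\<bar> ^ 3 = \<bar>c ^ 3\<bar>" by (simp flip: power_abs)
  moreover have "f^3 + (- e)^3 + (- g)^3 = 0" using efg by simp
  ultimately show ?thesis by blast
qed

lemma fermat3_descent_coprime_to_3:
  fixes p q w :: int
  assumes "coprime p q" "odd (p + q)" "\<not> 3 dvd p" "2 * p * (p^2 + 3 * q^2) = w ^ 3"
  shows "\<exists>x y z. x^3 + y^3 + z^3 = 0 \<and> \<bar>x * y * z\<bar> ^ 3 = \<bar>2 * p\<bar>"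
proof -
  have "2 * p dvd 6 * p * q" by (rule dvdI[of _ _ "3 * q"]) simp
  then have "coprime (2 * p) (p^2 + 3 * q^2)"
    using coprime_divisors[OF _ dvd_refl coprime_six_mult_norm_form[OF assms(1-3)]] by blast
  then obtain c s where c: "2 * p = c ^ 3" and "p^2 + 3 * q^2 = s ^ 3"
    using coprime_factors_odd_power_int[OF odd_numeral _ assms(4)] by blast
  then obtain a b where ab: "p = a^3 - 9 * a * b^2" "q = 3 * a^2 * b - 3 * b^3"
    using euler_norm_form_cube[OF assms(1-3)] by blast
  have p: "(a - 3 * b) * (a + 3 * b) * (2 * a) = 2 * p"
    using ab(1) by (simp add: power2_eq_square power3_eq_cube algebra_simps)
  then have "\<not> 3 dvd a" using assms(3) by auto
  then show ?thesis
    using cube_sum_of_factorisation_pm3b[OF euler_param_coprime[OF ab assms(1)]] p c by simp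
qed

lemma fermat3_descent_multiple_of_3:
  fixes p q r w :: int
  assumes "coprime p q" "odd (p + q)" "p = 3 * r" "2 * p * (p^2 + 3 * q^2) = w ^ 3"
  shows "\<exists>x y z. x^3 + y^3 + z^3 = 0 \<and> 9 * \<bar>x * y * z\<bar> ^ 3 = \<bar>2 * p\<bar>"
proof -
  have qr: "coprime q r" "odd (q + r)" "\<not> 3 dvd q"
    using assms(1-3) coprime_common_divisor[of p q 3] by (auto simp: coprime_commute)
  have "18 * r dvd (6 * q * r) ^ 2" by (rule dvdI[of _ _ "2 * q^2 * r"]) (simp add: power2_eq_square)
  moreover have "coprime ((6 * q * r) ^ 2) (q^2 + 3 * r^2)"
    using coprime_six_mult_norm_form[OF qr] by (simp only: coprime_power_left_iff) simp
  ultimately have "coprime (18 * r) (q^2 + 3 * r^2)"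
    using coprime_divisors[OF _ dvd_refl] by blast
  moreover have "18 * r * (q^2 + 3 * r^2) = w ^ 3"
    using assms(3,4) by (simp add: power2_eq_square algebra_simps)
  ultimately obtain c s where c: "18 * r = c ^ 3" and "q^2 + 3 * r^2 = s ^ 3"
    using coprime_factors_odd_power_int[OF odd_numeral] by blast
  then obtain a b where ab: "q = a^3 - 9 * a * b^2" "r = 3 * a^2 * b - 3 * b^3"
    using euler_norm_form_cube[OF qr] by blast
  have "c ^ 3 = 3 * (6 * r)" using c by simp
  then have "3 dvd c ^ 3" by simp
  then obtain c' where "c = 3 * c'" using prime_dvd_power[of 3 c 3] by auto
  then have "(a - b) * (a + b) * (2 * b) = c' ^ 3"
    using c ab(2) by (simp add: power2_eq_square power3_eq_cube algebra_simps)
  have "27 * c' ^ 3 = 18 * r" using c \<open>c = 3 * c'\<close> by (simp add: power_mult_distrib)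
  then have "27 * \<bar>c' ^ 3\<bar> = 18 * \<bar>r\<bar>" using arg_cong[of _ _ abs] by (fastforce simp: abs_mult)
  moreover obtain x y z where "x^3 + y^3 + z^3 = 0" "\<bar>x * y * z\<bar> ^ 3 = \<bar>c' ^ 3\<bar>"
    using cube_sum_of_factorisation_pmb[OF euler_param_coprime[OF ab qr(1)]
        \<open>(a - b) * (a + b) * (2 * b) = c' ^ 3\<close>] by blast
  ultimately show ?thesis
    using assms(3) by (intro exI[of _ x] exI[of _ y] exI[of _ z]) (simp add: abs_mult)
qed

lemma fermat3_descent_step:
  fixes p q w :: int
  assumes "coprime p q" "odd (p + q)" "p \<noteq> 0" "2 * p * (p^2 + 3 * q^2) = w ^ 3"
  shows "\<exists>a b c. a^3 + b^3 + c^3 = 0 \<and> a * b * c \<noteq> 0 \<and> \<bar>a * b * c\<bar> ^ 3 \<le> \<bar>2 * p\<bar>"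
proof -
  obtain a b c k where abc: "a^3 + b^3 + c^3 = 0" "k * \<bar>a * b * c\<bar> ^ 3 = \<bar>2 * p\<bar>" "k \<ge> 1"
  proof (cases "3 dvd p")
    case True
    then obtain r where "p = 3 * r" ..
    then show ?thesis
      using fermat3_descent_multiple_of_3[OF assms(1,2) _ assms(4)] that[of _ _ _ 9] by force
  next
    case False
    then show ?thesis
      using fermat3_descent_coprime_to_3[OF assms(1,2) _ assms(4)] that[of _ _ _ 1] by force
  qed
  moreover have "a * b * c \<noteq> 0" using abc(2) assms(3) by auto
  moreover have "\<bar>a * b * c\<bar> ^ 3 \<le> k * \<bar>a * b * c\<bar> ^ 3"
    using abc(3) by (simp add: mult_le_cancel_right1)
  ultimately show ?thesis by (metis (no_types))
qed

lemma abs_cube_neq_two_int: "\<bar>z :: int\<bar> ^ 3 \<noteq> 2"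
proof
  assume "\<bar>z\<bar> ^ 3 = 2"
  consider "\<bar>z\<bar> \<le> 1" | "2 \<le> \<bar>z\<bar>" by linarith
  then show False
  proof cases
    case 1
    then have "\<bar>z\<bar> ^ 3 \<le> 1" by (simp add: power_le_one)
    then show False using \<open>\<bar>z\<bar> ^ 3 = 2\<close> by simp
  next
    case 2
    then have "2 ^ 3 \<le> \<bar>z\<bar> ^ 3" by (rule power_mono) simp
    then show False using \<open>\<bar>z\<bar> ^ 3 = 2\<close> by simp
  qed
qed

lemma fermat3_descent_bound:
  fixes p q z :: int
  assumes "coprime p q" "p \<noteq> 0" "2 * p * (p^2 + 3 * q^2) = (- z) ^ 3"
  shows "\<bar>2 * p\<bar> < \<bar>z\<bar> ^ 3"
proof -
  have abs_z: "\<bar>z\<bar> ^ 3 = \<bar>2 * p\<bar> * (p^2 + 3 * q^2)"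
    using arg_cong[OF assms(3), of abs] by (simp add: abs_mult power_abs)
  have "q \<noteq> 0"
  proof
    assume "q = 0"
    then have "\<bar>p\<bar> = 1" using assms(1) by simp
    moreover have "p^2 = \<bar>p\<bar>^2" by simp
    ultimately show False using abs_z \<open>q = 0\<close> abs_cube_neq_two_int[of z] by (simp add: abs_mult)
  qed
  then have "1 < p^2 + 3 * q^2"
    using zero_less_power2[of q] zero_le_power2[of p] by linarith
  then have "\<bar>2 * p\<bar> * 1 < \<bar>z\<bar> ^ 3"
    unfolding abs_z using assms(2) by (intro mult_strict_left_mono) simp_all
  then show ?thesis by simp
qed

lemma fermat3_descent_odd:
  fixes x y z :: int
  assumes eq: "x^3 + y^3 + z^3 = 0" and "z \<noteq> 0" "coprime x y" "odd x" "odd y"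
  shows "\<exists>a b c. a^3 + b^3 + c^3 = 0 \<and> a * b * c \<noteq> 0 \<and> \<bar>a * b * c\<bar> < \<bar>x * y * z\<bar>"
proof -
  define p where "p = (x + y) div 2"
  define q where "q = (x - y) div 2"
  have xy: "x = p + q" "y = p - q"
    using assms(4,5) by (simp_all add: p_def q_def) presburger+
  have "coprime p q"
    using assms(3) by (rule coprime_imp_coprime) (simp_all add: xy)
  have "odd (p + q)" using assms(4) xy by simp
  have key: "2 * p * (p^2 + 3 * q^2) = (- z) ^ 3"
    using eq by (simp add: xy power2_eq_square power3_eq_cube algebra_simps)
  then have "p \<noteq> 0" using \<open>z \<noteq> 0\<close> by auto
  have "\<bar>2 * p\<bar> < \<bar>z\<bar> ^ 3" using fermat3_descent_bound[OF \<open>coprime p q\<close> \<open>p \<noteq> 0\<close> key] .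
  also have "\<dots> \<le> \<bar>x * y\<bar> ^ 3 * \<bar>z\<bar> ^ 3"
  proof -
    have "x * y \<noteq> 0" using assms(4,5) by auto
    then have "1 \<le> \<bar>x * y\<bar>" by (simp add: int_one_le_iff_zero_less)
    then have "1 \<le> \<bar>x * y\<bar> ^ 3" by (rule one_le_power)
    then show ?thesis by (simp add: mult_le_cancel_right1)
  qed
  also have "\<dots> = \<bar>x * y * z\<bar> ^ 3" by (simp add: abs_mult power_mult_distrib)
  finally have smaller: "\<bar>2 * p\<bar> < \<bar>x * y * z\<bar> ^ 3" by simp
  obtain a b c where abc: "a^3 + b^3 + c^3 = 0" "a * b * c \<noteq> 0" "\<bar>a * b * c\<bar> ^ 3 \<le> \<bar>2 * p\<bar>"
    using fermat3_descent_step[OF \<open>coprime p q\<close> \<open>odd (p + q)\<close> \<open>p \<noteq> 0\<close> key] by blast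
  then have "\<bar>a * b * c\<bar> ^ 3 < \<bar>x * y * z\<bar> ^ 3" using smaller by linarith
  then have "\<bar>a * b * c\<bar> < \<bar>x * y * z\<bar>"
    by (rule power_less_imp_less_base) simp
  then show ?thesis using abc(1,2) by blast
qed

lemma cube_sum_zero_coprime:
  fixes x y z :: int
  assumes "x^3 + y^3 + z^3 = 0" "coprime x y"
  shows "coprime x z"
proof (rule coprimeI)
  fix c assume "c dvd x" "c dvd z"
  then have "c ^ 3 dvd - (x^3 + z^3)" by (simp add: dvd_power_same)
  then have "c dvd y" using assms(1) pow_divides_pow_iff[of 3 c y] by (simp add: add.commute add_eq_0_iff2)
  then show "is_unit c" using \<open>c dvd x\<close> assms(2) coprime_common_divisor by blast
qed

lemma fermat3_descent_common_factor:
  fixes x y z :: int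
  assumes eq: "x^3 + y^3 + z^3 = 0" and nz: "x * y * z \<noteq> 0" and "\<not> coprime x y"
  shows "\<exists>a b c. a^3 + b^3 + c^3 = 0 \<and> a * b * c \<noteq> 0 \<and> \<bar>a * b * c\<bar> < \<bar>x * y * z\<bar>"
proof -
  define d where "d = gcd x y"
  have "d \<noteq> 1" "d \<noteq> 0" "d \<ge> 0" using assms(3) nz by (auto simp: d_def coprime_iff_gcd_eq_1)
  then have "d > 1" by linarith
  have "z^3 = - (x^3) - y^3" using eq by simp
  moreover have "d ^ 3 dvd - (x^3) - y^3"
    by (intro dvd_diff) (simp_all add: d_def dvd_power_same)
  ultimately have "d dvd z" using pow_divides_pow_iff[of 3 d z] by simp
  then obtain x' y' z' where xyz: "x = d * x'" "y = d * y'" "z = d * z'"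
    by (metis d_def dvd_def gcd_dvd1 gcd_dvd2)
  have "d ^ 3 * (x'^3 + y'^3 + z'^3) = 0" using eq by (simp add: xyz power_mult_distrib algebra_simps)
  then have "x'^3 + y'^3 + z'^3 = 0" using \<open>d > 1\<close> by simp
  moreover have "x' * y' * z' \<noteq> 0" using nz by (simp add: xyz)
  moreover have "\<bar>x' * y' * z'\<bar> < \<bar>x * y * z\<bar>"
  proof -
    have "1 < d ^ 3" using \<open>d > 1\<close> by (simp add: one_less_power)
    then have "1 * \<bar>x' * y' * z'\<bar> < d ^ 3 * \<bar>x' * y' * z'\<bar>"
      using \<open>x' * y' * z' \<noteq> 0\<close> by (intro mult_strict_right_mono) simp_all
    then show ?thesis using \<open>d > 1\<close> by (simp add: xyz abs_mult power3_eq_cube ac_simps)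
  qed
  ultimately show ?thesis by blast
qed

lemma fermat3_descent:
  fixes x y z :: int
  assumes eq: "x^3 + y^3 + z^3 = 0" and nz: "x * y * z \<noteq> 0"
  shows "\<exists>a b c. a^3 + b^3 + c^3 = 0 \<and> a * b * c \<noteq> 0 \<and> \<bar>a * b * c\<bar> < \<bar>x * y * z\<bar>"
proof (cases "coprime x y")
  case False
  then show ?thesis using fermat3_descent_common_factor[OF eq nz] by blast
next
  case True
  have perms: "y^3 + z^3 + x^3 = 0" "x^3 + z^3 + y^3 = 0" "y^3 + x^3 + z^3 = 0"
    using eq by (simp_all add: ac_simps)
  have "coprime x z" using cube_sum_zero_coprime[OF eq True] .
  have "coprime y z" using cube_sum_zero_coprime[OF perms(3)] True by (simp add: coprime_commute)
  have "x \<noteq> 0" "y \<noteq> 0" "z \<noteq> 0" using nz by auto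
  consider "odd x" "odd y" | "even x" "odd y" "odd z" | "even y" "odd x" "odd z"
    using True \<open>coprime x z\<close> \<open>coprime y z\<close> coprime_common_divisor[of _ _ 2] by fastforce
  then show ?thesis
  proof cases
    case 1
    then show ?thesis using fermat3_descent_odd[OF eq \<open>z \<noteq> 0\<close> True] by blast
  next
    case 2
    then show ?thesis using fermat3_descent_odd[OF perms(1) \<open>x \<noteq> 0\<close> \<open>coprime y z\<close>]
      by (simp add: ac_simps)
  next
    case 3
    then show ?thesis using fermat3_descent_odd[OF perms(2) \<open>y \<noteq> 0\<close> \<open>coprime x z\<close>]
      by (simp add: ac_simps)
  qed
qed

theorem fermat3_int:
  fixes x y z :: int
  shows "x^3 + y^3 + z^3 = 0 \<Longrightarrow> x * y * z = 0"
proof (induction "nat \<bar>x * y * z\<bar>" arbitrary: x y z rule: less_induct)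
  case less
  show ?case
  proof (rule ccontr)
    assume "x * y * z \<noteq> 0"
    then obtain a b c where "a^3 + b^3 + c^3 = 0" "a * b * c \<noteq> 0" "\<bar>a * b * c\<bar> < \<bar>x * y * z\<bar>"
      using fermat3_descent[OF less.prems] by blast
    moreover have "nat \<bar>a * b * c\<bar> < nat \<bar>x * y * z\<bar>"
      using \<open>\<bar>a * b * c\<bar> < \<bar>x * y * z\<bar>\<close> by (simp only: nat_less_eq_zless abs_ge_zero)
    ultimately show False using less.hyps[of a b c] by blast
  qed
qed

theorem fermat3_rat:
  fixes x y z :: rat
  assumes "x^3 + y^3 + z^3 = 0"
  shows "x * y * z = 0"
proof -
  obtain a d where "quotient_of x = (a, d)" by (cases "quotient_of x")
  then have x: "x = of_int a / of_int d" and "d > 0"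
    by (simp_all add: quotient_of_div quotient_of_denom_pos)
  obtain b e where "quotient_of y = (b, e)" by (cases "quotient_of y")
  then have y: "y = of_int b / of_int e" and "e > 0"
    by (simp_all add: quotient_of_div quotient_of_denom_pos)
  obtain c f where "quotient_of z = (c, f)" by (cases "quotient_of z")
  then have z: "z = of_int c / of_int f" and "f > 0"
    by (simp_all add: quotient_of_div quotient_of_denom_pos)
  have "of_int ((a * e * f)^3 + (b * d * f)^3 + (c * d * e)^3) = (of_int (d * e * f) ^ 3 :: rat) * (x^3 + y^3 + z^3)"
    using \<open>d > 0\<close> \<open>e > 0\<close> \<open>f > 0\<close> by (simp add: x y z field_simps power_mult_distrib)
  also have "\<dots> = 0" using assms by simp
  finally have "(a * e * f)^3 + (b * d * f)^3 + (c * d * e)^3 = 0" by (simp only: of_int_eq_0_iff)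
  then have "(a * e * f) * (b * d * f) * (c * d * e) = 0" by (rule fermat3_int)
  then show ?thesis using \<open>d > 0\<close> \<open>e > 0\<close> \<open>f > 0\<close> by (auto simp: x y z)
qed

section \<open>The curves \<open>Y\<^sub>A\<close>, \<open>Y\<^sub>B\<close>, \<open>Y\<^sub>C\<close>\<close>

lemma qA_sum_of_squares: "4 * qA t x = (2 * x + 2 * t^2 - 6 * t + 12)^2 + 12 * t^2"
  unfolding qA_def by algebra

lemma rat_points_qA: "rat_points qA = {(0, -6)}"
proof -
  have "qA t x = 0 \<longleftrightarrow> t = 0 \<and> x = -6" for t x
  proof
    assume "qA t x = 0"
    then have "(2 * x + 2 * t^2 - 6 * t + 12)^2 + 12 * t^2 = 0" using qA_sum_of_squares[of t x] by simp
    then have "t^2 = 0" "(2 * x + 2 * t^2 - 6 * t + 12)^2 = 0"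
      using zero_le_power2[of t] zero_le_power2[of "2 * x + 2 * t^2 - 6 * t + 12"] by linarith+
    then show "t = 0 \<and> x = -6" by simp
  qed (simp add: qA_def)
  then show ?thesis by (auto simp: rat_points_def)
qed

lemma qB_substitution:
  "qB t (t * w - 2 * t^2) =
     t^2 * (2 * (w^2 - 6 * w + 12) * t^2 + (w^3 - 18 * w^2 + 72 * w - 144) * t + 216)"
  unfolding qB_def by algebra

text \<open>The genus one curve \<open>v\<^sup>2 = w (w\<^sup>3 - 24 w\<^sup>2 + 144 w - 288)\<close> maps to the Fermat cubic via
  \<open>(w\<^sup>2 + v)\<^sup>3 + (w\<^sup>2 - v)\<^sup>3 = (2 w (w - 6))\<^sup>3\<close>.\<close>

lemma quartic_rat_point_w_eq_0:
  fixes v w :: rat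
  assumes "v^2 = w * (w^3 - 24 * w^2 + 144 * w - 288)"
  shows "w = 0"
proof (rule ccontr)
  assume "w \<noteq> 0"
  have "w \<noteq> 6" using assms zero_le_power2[of v] by auto
  have "(w^2 + v)^3 + (w^2 - v)^3 + (- (2 * w * (w - 6)))^3 = 6 * w^2 * (v^2 - w * (w^3 - 24 * w^2 + 144 * w - 288))"
    by algebra
  then have "(w^2 + v) * (w^2 - v) * (- (2 * w * (w - 6))) = 0"
    using assms by (intro fermat3_rat) simp
  then have "(w^2 + v) * (w^2 - v) = 0" using \<open>w \<noteq> 0\<close> \<open>w \<noteq> 6\<close> by simp
  moreover have "(w^2 + v) * (w^2 - v) = w * w^3 - v^2" by algebra
  ultimately have "w * (w^3 - 24 * w^2 + 144 * w - 288) = w * w^3" using assms by simp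
  then have "w^3 - 24 * w^2 + 144 * w - 288 = w^3" using \<open>w \<noteq> 0\<close> by simp
  moreover have "(w - 3)^2 + 3 = w^2 - 6 * w + 12" by (simp add: power2_eq_square algebra_simps)
  ultimately have "(w - 3)^2 + 3 = 0" by linarith
  then show False using zero_le_power2[of "w - 3"] by linarith
qed

lemma qB_eq_0_imp:
  assumes "qB t x = 0"
  shows "(t, x) \<in> {(0, 0), (3, 0), (3, -18)}"
proof (cases "t = 0")
  case True
  then show ?thesis using assms by (simp add: qB_def)
next
  case False
  define w where "w = (x + 2 * t^2) / t"
  define A where "A = w^2 - 6 * w + 12"
  define B where "B = w^3 - 18 * w^2 + 72 * w - 144"
  have x: "x = t * w - 2 * t^2" using False by (simp add: w_def field_simps power2_eq_square)
  have quad: "2 * A * t^2 + B * t + 216 = 0"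
    using assms qB_substitution[of t w] False by (simp add: x A_def B_def)
  have disc: "(4 * A * t + B)^2 = w * (w - 6)^2 * (w^3 - 24 * w^2 + 144 * w - 288)"
  proof -
    have "(4 * A * t + B)^2 = 8 * A * (2 * A * t^2 + B * t + 216) + B^2 - 1728 * A"
      by (simp add: power2_eq_square algebra_simps)
    then show ?thesis using quad unfolding A_def B_def by algebra
  qed
  have "w = 0 \<or> w = 6"
  proof (rule disjCI)
    assume "w \<noteq> 6"
    with disc have "((4 * A * t + B) / (w - 6))^2 = w * (w^3 - 24 * w^2 + 144 * w - 288)"
      by (simp add: power_divide)
    then show "w = 0" by (rule quartic_rat_point_w_eq_0)
  qed
  then have "A = 12" "B = -144" by (auto simp: A_def B_def)
  then have "24 * (t - 3)^2 = 0" using quad by (simp add: power2_eq_square algebra_simps)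
  then have "t = 3" by simp
  then show ?thesis using \<open>w = 0 \<or> w = 6\<close> x by auto
qed

lemma rat_points_qB: "rat_points qB = {(0, 0), (3, 0), (3, -18)}"
  using qB_eq_0_imp by (auto simp: rat_points_def qB_def)

definition eta_num :: "rat poly" where "eta_num = [:1, -6, 3, 1:]"

definition eta_den :: "rat poly" where "eta_den = [:0, -1, 1:]"

text \<open>On \<open>Y\<^sub>C\<close> with \<open>t \<noteq> 0\<close> put \<open>x = t w - 2 t\<^sup>2\<close> and \<open>w = 4 - 2 v\<close>; then \<open>t = \<eta>(v)\<close>, so
  \<open>\<lambda>(v) = \<eta>(v) (4 - 2 v) - 2 \<eta>(v)\<^sup>2\<close>, which has denominator \<open>(v (v - 1))\<^sup>2\<close>.\<close>

definition lambda_num :: "rat poly" where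
  "lambda_num = eta_num * [:4, -2:] * eta_den - smult 2 (eta_num ^ 2)"

definition lambda_den :: "rat poly" where "lambda_den = eta_den ^ 2"

lemma poly_eta_num: "poly eta_num v = v^3 + 3 * v^2 - 6 * v + 1"
  by (simp add: eta_num_def power2_eq_square power3_eq_cube algebra_simps)

lemma poly_eta_den: "poly eta_den v = v * (v - 1)"
  by (simp add: eta_den_def algebra_simps)

lemma eta_eq: "eta v = poly eta_num v / poly eta_den v"
  by (simp add: eta_def poly_eta_num poly_eta_den)

lemma lambda_eq:
  assumes "poly eta_den v \<noteq> 0"
  shows "poly lambda_num v / poly lambda_den v = eta v * (4 - 2 * v) - 2 * eta v ^ 2"
  using assms by (simp add: lambda_num_def lambda_den_def eta_eq field_simps power2_eq_square)

lemma qC_substitution: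
  "qC t (t * (4 - 2 * v) - 2 * t^2) = 8 * t^3 * (t * poly eta_den v - poly eta_num v)"
  unfolding qC_def poly_eta_num poly_eta_den by algebra

lemma qC_substitution_eq_0_iff:
  assumes "t \<noteq> 0"
  shows "qC t (t * (4 - 2 * v) - 2 * t^2) = 0 \<longleftrightarrow> poly eta_den v \<noteq> 0 \<and> t = eta v"
proof -
  have "poly eta_num v \<noteq> 0" if "poly eta_den v = 0"
    using that by (auto simp: poly_eta_num poly_eta_den)
  moreover have "qC t (t * (4 - 2 * v) - 2 * t^2) = 0 \<longleftrightarrow> t * poly eta_den v = poly eta_num v"
    unfolding qC_substitution using assms by simp
  moreover have "t * poly eta_den v = poly eta_num v \<longleftrightarrow> poly eta_den v \<noteq> 0 \<and> t = eta v"
  proof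
    assume *: "t * poly eta_den v = poly eta_num v"
    with calculation(1) have "poly eta_den v \<noteq> 0" by auto
    with * show "poly eta_den v \<noteq> 0 \<and> t = eta v" by (simp add: eta_eq field_simps)
  qed (simp add: eta_eq)
  ultimately show ?thesis by simp
qed

lemma rat_points_qC:
  "rat_points qC = {(0, 0)} \<union>
     {(eta v, poly lambda_num v / poly lambda_den v) | v. v \<noteq> 0 \<and> v \<noteq> 1}"
proof (intro set_eqI iffI)
  fix P assume "P \<in> rat_points qC"
  then obtain t x where P: "P = (t, x)" and q: "qC t x = 0" by (auto simp: rat_points_def)
  show "P \<in> {(0, 0)} \<union> {(eta v, poly lambda_num v / poly lambda_den v) | v. v \<noteq> 0 \<and> v \<noteq> 1}"
  proof (cases "t = 0")
    case True
    then show ?thesis using q P by (simp add: qC_def)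
  next
    case False
    define v where "v = (4 - (x + 2 * t^2) / t) / 2"
    have x: "x = t * (4 - 2 * v) - 2 * t^2" using False by (simp add: v_def field_simps power2_eq_square)
    then have "poly eta_den v \<noteq> 0" "t = eta v" using q qC_substitution_eq_0_iff[OF False] by auto
    moreover from this have "x = poly lambda_num v / poly lambda_den v"
      by (simp add: x lambda_eq algebra_simps power2_eq_square)
    ultimately show ?thesis using P by (auto simp: poly_eta_den)
  qed
next
  fix P assume "P \<in> {(0, 0)} \<union> {(eta v, poly lambda_num v / poly lambda_den v) | v. v \<noteq> 0 \<and> v \<noteq> 1}"
  then consider "P = (0, 0)" | v where "v \<noteq> 0" "v \<noteq> 1" "P = (eta v, poly lambda_num v / poly lambda_den v)"
    by blast
  then show "P \<in> rat_points qC"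
  proof cases
    case 1
    then show ?thesis by (simp add: rat_points_def qC_def)
  next
    case (2 v)
    then have "poly eta_den v \<noteq> 0" by (simp add: poly_eta_den)
    then have "qC (eta v) (eta v * (4 - 2 * v) - 2 * eta v ^ 2) = 0"
      unfolding qC_substitution by (simp add: eta_eq)
    then show ?thesis
      using 2(3) \<open>poly eta_den v \<noteq> 0\<close> by (simp add: rat_points_def lambda_eq)
  qed
qed

theorem lemma3p2:
  shows "rat_points qA = {(0, -6)}
     \<and> rat_points qB = {(0, 0), (3, 0), (3, -18)}
     \<and> (\<exists>p r :: rat poly. r \<noteq> 0 \<and> (\<forall>v. v \<noteq> 0 \<and> v \<noteq> 1 \<longrightarrow> poly r v \<noteq> 0) \<and>
          rat_points qC = {(0, 0)} \<union> {(eta v, poly p v / poly r v) | v. v \<noteq> 0 \<and> v \<noteq> 1})"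
proof -
  have den: "\<forall>v. v \<noteq> 0 \<and> v \<noteq> 1 \<longrightarrow> poly lambda_den v \<noteq> 0"
    by (simp add: lambda_den_def poly_eta_den)
  then have "poly lambda_den 2 \<noteq> 0" by simp
  then have "lambda_den \<noteq> 0" by auto
  then show ?thesis
    by (intro conjI rat_points_qA rat_points_qB exI[of _ lambda_num] exI[of _ lambda_den] den rat_points_qC)
qed

end
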